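(* For every $x\in[0,1/56]$ there exists a sequence $(\tilde d_i(x))_{i\ge1}$ with each $\tilde d_i(x)\in\{0\}\cup\{1/n:n\ge1\}$ such that $$x=\sum_{i=1}^{\infty}\frac{\tilde d_i(x)}{8^i}.$$ *)

theory Defs
  imports "HOL-Analysis.Analysis"
begin

end

theory Submission
  imports Defs
begin

text \<open>A greedy expansion: from \<open>v\<^sub>0 = x\<close> repeatedly pick a digit \<open>c\<close> with
  \<open>v\<^sub>k\<^sub>+\<^sub>1 = 8 v\<^sub>k - c\<close> staying in \<open>[0, 1/56]\<close>; this is possible because on
  \<open>(1/56, 1/7]\<close> the largest unit fraction \<open>1/n \<le> y\<close> satisfies \<open>n \<ge> 7\<close> and
  \<open>y - 1/n \<le> y/n \<le> 1/56\<close> (for \<open>n = 7\<close> even \<open>y = 1/7\<close>). The remainders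
  \<open>v\<^sub>k / 8\<^sup>k\<close> then tend to \<open>0\<close>.\<close>

lemma sums_of_digit_choice:
  fixes b r x :: real and S D :: "real set"
  assumes "b > 1" and bounded: "\<And>v. v \<in> S \<Longrightarrow> \<bar>v\<bar> \<le> r"
    and choice: "\<And>v. v \<in> S \<Longrightarrow> \<exists>c\<in>D. b * v - c \<in> S"
    and "x \<in> S"
  shows "\<exists>d. (\<forall>i\<ge>1. d i \<in> D) \<and> (\<lambda>i. d (Suc i) / b ^ Suc i) sums x"
proof -
  define digit where "digit v = (SOME c. c \<in> D \<and> b * v - c \<in> S)" for v
  have digit: "digit v \<in> D" "b * v - digit v \<in> S" if "v \<in> S" for v
    using someI_ex[OF choice[OF that, unfolded Bex_def]] by (simp_all add: digit_def)
  define v where "v k = ((\<lambda>u. b * u - digit u) ^^ k) x" for k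
  have v_in_S: "v k \<in> S" for k
    by (induction k) (simp_all add: v_def \<open>x \<in> S\<close> digit)
  define d where "d i = digit (v (i - 1))" for i
  have v_Suc: "v (Suc k) = b * v k - d (Suc k)" for k
    by (simp add: v_def d_def)
  have partial_sums: "(\<Sum>i<k. d (Suc i) / b ^ Suc i) = x - v k / b ^ k" for k
  proof (induction k)
    case 0
    then show ?case by (simp add: v_def)
  next
    case (Suc k)
    then show ?case using \<open>b > 1\<close> by (simp add: v_Suc field_simps) (metis distrib_left)
  qed
  have "(\<lambda>k. v k / b ^ k) \<longlonglongrightarrow> 0"
  proof (rule Lim_null_comparison)
    show "\<forall>\<^sub>F k in sequentially. norm (v k / b ^ k) \<le> r * (1 / b) ^ k"
      using bounded[OF v_in_S] \<open>b > 1\<close>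
      by (intro always_eventually allI) (simp add: abs_divide power_divide divide_right_mono)
    show "(\<lambda>k. r * (1 / b) ^ k) \<longlonglongrightarrow> 0"
      using \<open>b > 1\<close> by (intro tendsto_mult_right_zero LIMSEQ_power_zero) auto
  qed
  then have "(\<lambda>k. x - v k / b ^ k) \<longlonglongrightarrow> x"
    using tendsto_diff[OF tendsto_const] by fastforce
  then have "(\<lambda>i. d (Suc i) / b ^ Suc i) sums x"
    unfolding sums_def partial_sums .
  moreover have "\<forall>i\<ge>1. d i \<in> D"
    using digit(1)[OF v_in_S] by (simp add: d_def)
  ultimately show ?thesis by blast
qed

lemma unit_fraction_digit_step:
  fixes v :: real
  assumes "0 \<le> v" "v \<le> 1/56"
  shows "\<exists>c \<in> {0} \<union> {1 / real n | n. n \<ge> 1}. 8 * v - c \<in> {0..1/56}"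
proof (cases "8 * v \<le> 1/56")
  case True
  then show ?thesis using assms by auto
next
  case False
  define y where "y = 8 * v"
  have y: "1/56 < y" "y \<le> 1/7" using False assms by (auto simp: y_def)
  define n where "n = nat \<lceil>1/y\<rceil>"
  have "1/y \<ge> 7" using y by (simp add: field_simps)
  then have n_ge: "real n \<ge> 1/y" and n_less: "real n < 1/y + 1" and "n \<ge> 7"
    unfolding n_def by linarith+
  have lower: "y * real n \<ge> 1" and upper: "y * real n < 1 + y"
    using n_ge n_less y by (simp_all add: field_simps)
  have "y * real n - 1 \<le> real n / 56"
  proof (cases "n = 7")
    case True
    then show ?thesis using y by simp
  next
    case False
    then have "real n \<ge> 8" using \<open>n \<ge> 7\<close> by simp
    then show ?thesis using upper y by linarith
  qed
  then have "y - 1 / real n \<in> {0..1/56}"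
    using lower \<open>n \<ge> 7\<close> by (simp add: field_simps)
  moreover have "1 / real n \<in> {1 / real n | n. n \<ge> 1}"
    using \<open>n \<ge> 7\<close> by auto
  ultimately show ?thesis unfolding y_def by blast
qed

theorem lemma2p4:
  fixes x :: real
  assumes "0 \<le> x" and "x \<le> 1/56"
  shows "\<exists>d :: nat \<Rightarrow> real.
           (\<forall>i\<ge>1. d i \<in> {0} \<union> {1 / real n | n. n \<ge> 1}) \<and>
           (\<lambda>i. d (Suc i) / 8 ^ (Suc i)) sums x"
  by (rule sums_of_digit_choice[where S = "{0..1/56}" and r = "1/56"])
    (use assms unit_fraction_digit_step in auto)

end
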